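(* Let $(\Sigma,h)$ be an $n$-dimensional Riemannian manifold and $Y$ a vector field on $\Sigma$ with $|Y|^2\neq0$, and let $\widehat\nabla$ be the Levi-Civita connection of $h$. Then $D_{ij}:=|Y|^{-n-2}(Y_iY_j)_{\mathrm{tf}}$ is a TT tensor if and only if $Y^j(\widehat\nabla_{(i}Y_{j)})_{\mathrm{tf}}=0$. (In particular this holds if $Y$ is a conformal Killing vector field.)
   Context: $(T_{ij})_{\mathrm{tf}}$ denotes the $h$-trace-free part of a symmetric tensor, e.g. $(Y_iY_j)_{\mathrm{tf}}=Y_iY_j-\frac1n|Y|^2h_{ij}$. A TT tensor is a symmetric, trace-free, divergence-free $(0,2)$-tensor. *)

theory Defs
  imports "HOL-Analysis.Analysis"
begin

text \<open>Points of a coordinate chart are x :: real^'n,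
  so n = CARD('n). A metric is h :: real^'n => real^'n^'n (components h x $ i $ j),
  a vector field Y :: real^'n => real^'n has contravariant components Y x $ i,
  a (0,2)-tensor field is T :: real^'n => 'n => 'n => real.\<close>

definition pd :: "(real^'n \<Rightarrow> real) \<Rightarrow> 'n \<Rightarrow> real^'n \<Rightarrow> real" where
  "pd f k x = frechet_derivative f (at x) (axis k 1)"

definition dimn :: "'n::finite itself \<Rightarrow> real" where
  "dimn _ = real CARD('n)"

definition riemannian_metric_on :: "(real^'n::finite) set \<Rightarrow> (real^'n \<Rightarrow> real^'n^'n) \<Rightarrow> bool" where
  "riemannian_metric_on U h \<longleftrightarrow>
     (\<forall>x\<in>U. (\<forall>i j. h x $ i $ j = h x $ j $ i)
        \<and> (\<forall>v. v \<noteq> 0 \<longrightarrow> (\<Sum>i\<in>UNIV. \<Sum>j\<in>UNIV. h x $ i $ j * v $ i * v $ j) > 0)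
        \<and> (\<forall>i j. (\<lambda>y. h y $ i $ j) differentiable (at x)))"

definition vector_field_on :: "(real^'n::finite) set \<Rightarrow> (real^'n \<Rightarrow> real^'n) \<Rightarrow> bool" where
  "vector_field_on U Y \<longleftrightarrow> (\<forall>x\<in>U. \<forall>i. (\<lambda>y. Y y $ i) differentiable (at x))"

definition hinv :: "(real^'n::finite \<Rightarrow> real^'n^'n) \<Rightarrow> real^'n \<Rightarrow> 'n \<Rightarrow> 'n \<Rightarrow> real" where
  "hinv h x i j = matrix_inv (h x) $ i $ j"

definition christoffel :: "(real^'n::finite \<Rightarrow> real^'n^'n) \<Rightarrow> real^'n \<Rightarrow> 'n \<Rightarrow> 'n \<Rightarrow> 'n \<Rightarrow> real" where
  "christoffel h x k i j = (1/2) * (\<Sum>l\<in>UNIV. hinv h x k l *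
      (pd (\<lambda>y. h y $ j $ l) i x + pd (\<lambda>y. h y $ i $ l) j x - pd (\<lambda>y. h y $ i $ j) l x))"

definition lower :: "(real^'n::finite \<Rightarrow> real^'n^'n) \<Rightarrow> (real^'n \<Rightarrow> real^'n) \<Rightarrow> real^'n \<Rightarrow> 'n \<Rightarrow> real" where
  "lower h Y x i = (\<Sum>j\<in>UNIV. h x $ i $ j * Y x $ j)"

definition sqnorm :: "(real^'n::finite \<Rightarrow> real^'n^'n) \<Rightarrow> (real^'n \<Rightarrow> real^'n) \<Rightarrow> real^'n \<Rightarrow> real" where
  "sqnorm h Y x = (\<Sum>i\<in>UNIV. \<Sum>j\<in>UNIV. h x $ i $ j * Y x $ i * Y x $ j)"

definition cov1 :: "(real^'n::finite \<Rightarrow> real^'n^'n) \<Rightarrow> (real^'n \<Rightarrow> 'n \<Rightarrow> real) \<Rightarrow> real^'n \<Rightarrow> 'n \<Rightarrow> 'n \<Rightarrow> real" where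
  "cov1 h w x i j = pd (\<lambda>y. w y j) i x - (\<Sum>k\<in>UNIV. christoffel h x k i j * w x k)"

definition cov2 :: "(real^'n::finite \<Rightarrow> real^'n^'n) \<Rightarrow> (real^'n \<Rightarrow> 'n \<Rightarrow> 'n \<Rightarrow> real) \<Rightarrow> real^'n \<Rightarrow> 'n \<Rightarrow> 'n \<Rightarrow> 'n \<Rightarrow> real" where
  "cov2 h T x k i j = pd (\<lambda>y. T y i j) k x
     - (\<Sum>l\<in>UNIV. christoffel h x l k i * T x l j) - (\<Sum>l\<in>UNIV. christoffel h x l k j * T x i l)"

definition htrace :: "(real^'n::finite \<Rightarrow> real^'n^'n) \<Rightarrow> real^'n \<Rightarrow> ('n \<Rightarrow> 'n \<Rightarrow> real) \<Rightarrow> real" where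
  "htrace h x T = (\<Sum>i\<in>UNIV. \<Sum>j\<in>UNIV. hinv h x i j * T i j)"

definition tracefree :: "(real^'n::finite \<Rightarrow> real^'n^'n) \<Rightarrow> real^'n \<Rightarrow> ('n \<Rightarrow> 'n \<Rightarrow> real) \<Rightarrow> 'n \<Rightarrow> 'n \<Rightarrow> real" where
  "tracefree h x T i j = T i j - htrace h x T / dimn TYPE('n) * h x $ i $ j"

definition divergence :: "(real^'n::finite \<Rightarrow> real^'n^'n) \<Rightarrow> (real^'n \<Rightarrow> 'n \<Rightarrow> 'n \<Rightarrow> real) \<Rightarrow> real^'n \<Rightarrow> 'n \<Rightarrow> real" where
  "divergence h T x i = (\<Sum>j\<in>UNIV. \<Sum>k\<in>UNIV. hinv h x j k * cov2 h T x k i j)"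

definition TT_on :: "(real^'n::finite) set \<Rightarrow> (real^'n \<Rightarrow> real^'n^'n) \<Rightarrow> (real^'n \<Rightarrow> 'n \<Rightarrow> 'n \<Rightarrow> real) \<Rightarrow> bool" where
  "TT_on U h T \<longleftrightarrow> (\<forall>x\<in>U. (\<forall>i j. T x i j = T x j i) \<and> htrace h x (T x) = 0
                        \<and> (\<forall>i. divergence h T x i = 0))"

definition Dtensor :: "(real^'n::finite \<Rightarrow> real^'n^'n) \<Rightarrow> (real^'n \<Rightarrow> real^'n) \<Rightarrow> real^'n \<Rightarrow> 'n \<Rightarrow> 'n \<Rightarrow> real" where
  "Dtensor h Y x i j = sqrt (sqnorm h Y x) powr (- dimn TYPE('n) - 2) *
      tracefree h x (\<lambda>a b. lower h Y x a * lower h Y x b) i j"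

definition symcov :: "(real^'n::finite \<Rightarrow> real^'n^'n) \<Rightarrow> (real^'n \<Rightarrow> real^'n) \<Rightarrow> real^'n \<Rightarrow> 'n \<Rightarrow> 'n \<Rightarrow> real" where
  "symcov h Y x i j = (cov1 h (lower h Y) x i j + cov1 h (lower h Y) x j i) / 2"

end

theory Submission
  imports Defs
begin

text \<open>Write D = w E with w = |Y|^(-n-2) and E_ij = Y_i Y_j - |Y|^2 h_ij / n, so D is always
  symmetric and trace-free. Since the Levi-Civita connection is metric,
  nabla_k E_ij = (nabla_k Y_i) Y_j + Y_i (nabla_k Y_j) - (d_k |Y|^2) h_ij / n, and
  d_k |Y|^2 = 2 Y^j nabla_k Y_j. Contracting with h^jk, one finds for C_i = Y^j (nabla_(i Y_j))_tf
  and Z = Y^i C_i that (div D)_i = w (2 C_i - (n+2) Y_i Z / |Y|^2). Hence C = 0 forces div D = 0;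
  conversely, contracting div D = 0 with Y^i gives 2 Z = (n+2) Z, so Z = 0 and then C = 0.\<close>

lemma has_derivative_imp_pd: "(f has_derivative f') (at x) \<Longrightarrow> pd f k x = f' (axis k 1)"
  by (simp add: pd_def frechet_derivative_at[symmetric])

lemma pd_cong:
  assumes "open U" "x \<in> U" "\<And>y. y \<in> U \<Longrightarrow> f y = g y"
  shows "pd f k x = pd g k x"
proof -
  have "(f has_derivative f') (at x) \<longleftrightarrow> (g has_derivative f') (at x)" for f'
    using has_derivative_transform_within_open[of f f' x UNIV U g]
          has_derivative_transform_within_open[of g f' x UNIV U f] assms by auto
  then show ?thesis unfolding pd_def frechet_derivative_def by simp
qed

lemma pd_mult:
  fixes f g :: "real^'n::finite \<Rightarrow> real"
  assumes "f differentiable at x" "g differentiable at x"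
  shows "pd (\<lambda>y. f y * g y) k x = pd f k x * g x + f x * pd g k x"
  using has_derivative_imp_pd[OF has_derivative_mult[OF assms[THEN frechet_derivative_works[THEN iffD1]]]]
  by (simp add: pd_def algebra_simps)

lemma pd_diff:
  fixes f g :: "real^'n::finite \<Rightarrow> real"
  assumes "f differentiable at x" "g differentiable at x"
  shows "pd (\<lambda>y. f y - g y) k x = pd f k x - pd g k x"
  using has_derivative_imp_pd[OF has_derivative_diff[OF assms[THEN frechet_derivative_works[THEN iffD1]]]]
  by (simp add: pd_def)

lemma pd_divide_const:
  fixes f :: "real^'n::finite \<Rightarrow> real"
  assumes "f differentiable at x"
  shows "pd (\<lambda>y. f y / c) k x = pd f k x / c"
  using has_derivative_imp_pd[OF has_derivative_mult_left[OF assms[THEN frechet_derivative_works[THEN iffD1]],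
        of "1 / c"]]
  by (simp add: pd_def)

lemma pd_sum:
  fixes f :: "'a \<Rightarrow> real^'n::finite \<Rightarrow> real"
  assumes "finite A" "\<And>a. a \<in> A \<Longrightarrow> f a differentiable at x"
  shows "pd (\<lambda>y. \<Sum>a\<in>A. f a y) k x = (\<Sum>a\<in>A. pd (f a) k x)"
proof -
  have "((\<lambda>y. \<Sum>a\<in>A. f a y) has_derivative (\<lambda>v. \<Sum>a\<in>A. frechet_derivative (f a) (at x) v)) (at x)"
    using assms by (intro has_derivative_sum) (auto simp: frechet_derivative_works)
  from has_derivative_imp_pd[OF this] show ?thesis by (simp add: pd_def)
qed

lemma pd_powr:
  fixes f :: "real^'n::finite \<Rightarrow> real"
  assumes "f differentiable at x" "f x > 0"
  shows "pd (\<lambda>y. f y powr a) k x = a * f x powr a * pd f k x / f x"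
  using has_derivative_imp_pd[OF has_derivative_powr[OF assms(1)[THEN frechet_derivative_works[THEN iffD1]]
        has_derivative_const[of a] assms(2)]]
  by (simp add: pd_def)

lemma cov2_cong:
  assumes "open U" "x \<in> U" "\<And>y. y \<in> U \<Longrightarrow> S y = T y"
  shows "cov2 h S x k i j = cov2 h T x k i j"
  unfolding cov2_def using pd_cong[OF assms(1,2), of "\<lambda>y. S y i j" "\<lambda>y. T y i j"] assms by simp

lemma cov2_diff:
  assumes "\<And>i j. (\<lambda>y. S y i j) differentiable at x" "\<And>i j. (\<lambda>y. T y i j) differentiable at x"
  shows "cov2 h (\<lambda>y i j. S y i j - T y i j) x k i j = cov2 h S x k i j - cov2 h T x k i j"
  unfolding cov2_def using assms by (simp add: pd_diff right_diff_distrib sum_subtractf)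

lemma cov2_mult_scalar:
  assumes "w differentiable at x" "\<And>i j. (\<lambda>y. T y i j) differentiable at x"
  shows "cov2 h (\<lambda>y i j. w y * T y i j) x k i j = pd w k x * T x i j + w x * cov2 h T x k i j"
  unfolding cov2_def using assms
  by (simp add: pd_mult sum_distrib_left right_diff_distrib mult.left_commute)

lemma cov2_tensor_product:
  assumes "\<And>i. (\<lambda>y. u y i) differentiable at x" "\<And>j. (\<lambda>y. v y j) differentiable at x"
  shows "cov2 h (\<lambda>y i j. u y i * v y j) x k i j = cov1 h u x k i * v x j + u x i * cov1 h v x k j"
  unfolding cov2_def cov1_def using assms
  by (simp add: pd_mult sum_distrib_left sum_distrib_right algebra_simps)

lemma matrix_inv:
  assumes "invertible A"
  shows matrix_inv_right: "A ** matrix_inv A = mat 1" and matrix_inv_left: "matrix_inv A ** A = mat 1"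
  using someI_ex[OF assms[unfolded invertible_def]] unfolding matrix_inv_def by blast+

lemma matrix_inv_symmetric:
  fixes A :: "'a::comm_semiring_1^'n^'n"
  assumes "invertible A" "transpose A = A"
  shows "transpose (matrix_inv A) = matrix_inv A"
proof -
  have "transpose (matrix_inv A) = transpose (matrix_inv A) ** (A ** matrix_inv A)"
    using matrix_inv_right[OF assms(1)] by simp
  also have "\<dots> = transpose (A ** matrix_inv A) ** matrix_inv A"
    by (simp only: matrix_transpose_mul assms(2) matrix_mul_assoc)
  also have "\<dots> = matrix_inv A"
    using matrix_inv_right[OF assms(1)] by (simp add: transpose_mat)
  finally show ?thesis .
qed

lemma dimn_pos: "dimn TYPE('n::finite) > 0"
  by (simp add: dimn_def)

lemma sum_vector_lower: "(\<Sum>j\<in>UNIV. Y x $ j * lower h Y x j) = sqnorm h Y x"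
  unfolding sqnorm_def lower_def by (simp add: sum_distrib_left mult_ac)

lemma contract_tracefree:
  fixes Y :: "real^'n::finite \<Rightarrow> real^'n"
  shows "(\<Sum>j\<in>UNIV. Y x $ j * tracefree h x S i j)
    = (\<Sum>j\<in>UNIV. Y x $ j * S i j) - htrace h x S / dimn TYPE('n) * lower h Y x i"
  unfolding tracefree_def lower_def
  by (simp add: right_diff_distrib sum_subtractf sum_distrib_left sum_divide_distrib mult_ac)

locale riemannian_chart =
  fixes U :: "(real^'n::finite) set" and h :: "real^'n \<Rightarrow> real^'n^'n"
  assumes open_U: "open U" and riemannian: "riemannian_metric_on U h"
begin

lemma metric_sym: "x \<in> U \<Longrightarrow> h x $ i $ j = h x $ j $ i"
  using riemannian unfolding riemannian_metric_on_def by blast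

lemma metric_differentiable: "x \<in> U \<Longrightarrow> (\<lambda>y. h y $ i $ j) differentiable at x"
  using riemannian unfolding riemannian_metric_on_def by blast

lemma metric_pos:
  "x \<in> U \<Longrightarrow> v \<noteq> 0 \<Longrightarrow> (\<Sum>i\<in>UNIV. \<Sum>j\<in>UNIV. h x $ i $ j * v $ i * v $ j) > 0"
  using riemannian unfolding riemannian_metric_on_def by blast

lemma metric_invertible:
  assumes "x \<in> U"
  shows "invertible (h x)"
proof -
  have "v = 0" if "h x *v v = 0" for v
  proof -
    have "(\<Sum>i\<in>UNIV. \<Sum>j\<in>UNIV. h x $ i $ j * v $ i * v $ j) = (\<Sum>i\<in>UNIV. v $ i * (h x *v v) $ i)"
      by (simp add: matrix_vector_mult_def sum_distrib_left mult_ac)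
    then show ?thesis using metric_pos[OF assms, of v] that by force
  qed
  then show ?thesis
    using matrix_left_invertible_ker invertible_left_inverse by blast
qed

lemma metric_hinv:
  assumes "x \<in> U"
  shows "(\<Sum>j\<in>UNIV. h x $ i $ j * hinv h x j k) = (if i = k then 1 else 0)"
proof -
  have "(h x ** matrix_inv (h x)) $ i $ k = mat 1 $ i $ k"
    by (simp add: matrix_inv_right[OF metric_invertible[OF assms]])
  then show ?thesis unfolding hinv_def matrix_matrix_mult_def mat_def by simp
qed

lemma hinv_metric:
  assumes "x \<in> U"
  shows "(\<Sum>j\<in>UNIV. hinv h x i j * h x $ j $ k) = (if i = k then 1 else 0)"
proof -
  have "(matrix_inv (h x) ** h x) $ i $ k = mat 1 $ i $ k"
    by (simp add: matrix_inv_left[OF metric_invertible[OF assms]])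
  then show ?thesis unfolding hinv_def matrix_matrix_mult_def mat_def by simp
qed

lemma hinv_sym:
  assumes "x \<in> U"
  shows "hinv h x i j = hinv h x j i"
proof -
  have "transpose (h x) = h x"
    using metric_sym[OF assms] by (simp add: transpose_def vec_eq_iff)
  from matrix_inv_symmetric[OF metric_invertible[OF assms] this]
  have "transpose (matrix_inv (h x)) $ j $ i = matrix_inv (h x) $ j $ i" by simp
  then show ?thesis unfolding hinv_def transpose_def by simp
qed

lemma hinv_metric_contract:
  assumes "x \<in> U"
  shows "(\<Sum>j\<in>UNIV. hinv h x k j * (\<Sum>m\<in>UNIV. h x $ j $ m * X m)) = X k"
proof -
  have "(\<Sum>j\<in>UNIV. hinv h x k j * (\<Sum>m\<in>UNIV. h x $ j $ m * X m))
      = (\<Sum>m\<in>UNIV. (\<Sum>j\<in>UNIV. hinv h x k j * h x $ j $ m) * X m)"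
    unfolding sum_distrib_left by (subst sum.swap) (simp add: sum_distrib_right mult.assoc)
  then show ?thesis by (simp add: hinv_metric[OF assms] of_bool_def[symmetric])
qed

lemma metric_hinv_contract:
  assumes "x \<in> U"
  shows "(\<Sum>j\<in>UNIV. h x $ k $ j * (\<Sum>m\<in>UNIV. hinv h x j m * X m)) = X k"
proof -
  have "(\<Sum>j\<in>UNIV. h x $ k $ j * (\<Sum>m\<in>UNIV. hinv h x j m * X m))
      = (\<Sum>m\<in>UNIV. (\<Sum>j\<in>UNIV. h x $ k $ j * hinv h x j m) * X m)"
    unfolding sum_distrib_left by (subst sum.swap) (simp add: sum_distrib_right mult.assoc)
  then show ?thesis by (simp add: metric_hinv[OF assms] of_bool_def[symmetric])
qed

lemma christoffel_lowered:
  assumes "x \<in> U"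
  shows "(\<Sum>l\<in>UNIV. christoffel h x l k i * h x $ l $ j)
    = (pd (\<lambda>y. h y $ i $ j) k x + pd (\<lambda>y. h y $ k $ j) i x - pd (\<lambda>y. h y $ k $ i) j x) / 2"
proof -
  define X where "X m = pd (\<lambda>y. h y $ i $ m) k x + pd (\<lambda>y. h y $ k $ m) i x - pd (\<lambda>y. h y $ k $ i) m x" for m
  have christoffel: "christoffel h x l k i = (\<Sum>m\<in>UNIV. hinv h x l m * X m) / 2" for l
    by (simp add: christoffel_def X_def)
  have halve: "(\<Sum>l\<in>UNIV. s l / 2 * h x $ l $ j) = (\<Sum>l\<in>UNIV. h x $ j $ l * s l) / 2" for s
    by (simp add: sum_divide_distrib metric_sym[OF assms, of j] mult.commute)
  have "(\<Sum>l\<in>UNIV. christoffel h x l k i * h x $ l $ j)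
      = (\<Sum>l\<in>UNIV. h x $ j $ l * (\<Sum>m\<in>UNIV. hinv h x l m * X m)) / 2"
    unfolding christoffel by (rule halve)
  also have "\<dots> = X j / 2"
    by (simp only: metric_hinv_contract[OF assms])
  finally show ?thesis by (simp add: X_def)
qed

lemma metric_compatibility:
  assumes "x \<in> U"
  shows "pd (\<lambda>y. h y $ i $ j) k x
    = (\<Sum>l\<in>UNIV. christoffel h x l k i * h x $ l $ j) + (\<Sum>l\<in>UNIV. christoffel h x l k j * h x $ i $ l)"
proof -
  have sym: "pd (\<lambda>y. h y $ a $ b) c x = pd (\<lambda>y. h y $ b $ a) c x" for a b c
    by (rule pd_cong[OF open_U assms]) (rule metric_sym)
  have "(\<Sum>l\<in>UNIV. christoffel h x l k j * h x $ i $ l) = (\<Sum>l\<in>UNIV. christoffel h x l k j * h x $ l $ i)"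
    by (simp add: metric_sym[OF assms, of i])
  then show ?thesis
    using christoffel_lowered[OF assms, of k i j] christoffel_lowered[OF assms, of k j i] sym[of j i k]
    by argo
qed

lemma cov2_metric: "x \<in> U \<Longrightarrow> cov2 h (\<lambda>y i j. h y $ i $ j) x k i j = 0"
  unfolding cov2_def using metric_compatibility by simp

lemma hinv_lower: "x \<in> U \<Longrightarrow> (\<Sum>j\<in>UNIV. hinv h x k j * lower h Y x j) = Y x $ k"
  unfolding lower_def by (rule hinv_metric_contract)

lemma htrace_outer_lower:
  assumes "x \<in> U"
  shows "htrace h x (\<lambda>i j. lower h Y x i * lower h Y x j) = sqnorm h Y x"
proof -
  have "htrace h x (\<lambda>i j. lower h Y x i * lower h Y x j)
      = (\<Sum>j\<in>UNIV. \<Sum>i\<in>UNIV. hinv h x i j * (lower h Y x i * lower h Y x j))"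
    unfolding htrace_def by (rule sum.swap)
  also have "\<dots> = (\<Sum>j\<in>UNIV. (\<Sum>i\<in>UNIV. hinv h x j i * lower h Y x i) * lower h Y x j)"
    by (simp add: sum_distrib_left sum_distrib_right hinv_sym[OF assms] mult_ac)
  finally show ?thesis by (simp add: hinv_lower[OF assms] sum_vector_lower)
qed

lemma htrace_metric:
  assumes "x \<in> U"
  shows "htrace h x (\<lambda>i j. h x $ i $ j) = dimn TYPE('n)"
proof -
  have "(\<Sum>j\<in>UNIV. hinv h x i j * h x $ i $ j) = (\<Sum>j\<in>UNIV. hinv h x i j * h x $ j $ i)" for i
    using metric_sym[OF assms] by simp
  then show ?thesis unfolding htrace_def dimn_def by (simp add: hinv_metric[OF assms])
qed

lemma htrace_symcov:
  assumes "x \<in> U"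
  shows "htrace h x (symcov h Y x) = htrace h x (cov1 h (lower h Y) x)"
proof -
  let ?N = "cov1 h (lower h Y) x"
  have swap: "(\<Sum>i\<in>UNIV. \<Sum>j\<in>UNIV. hinv h x i j * ?N j i) = htrace h x ?N"
    unfolding htrace_def by (subst sum.swap) (simp add: hinv_sym[OF assms])
  have "htrace h x (symcov h Y x) = (htrace h x ?N + (\<Sum>i\<in>UNIV. \<Sum>j\<in>UNIV. hinv h x i j * ?N j i)) / 2"
    unfolding htrace_def symcov_def
    by (simp add: sum.distrib add_divide_distrib distrib_left sum_divide_distrib)
  then show ?thesis using swap by simp
qed

lemma sqnorm_nonzero_imp_pos:
  assumes "x \<in> U" "sqnorm h Y x \<noteq> 0"
  shows "sqnorm h Y x > 0"
proof -
  have "Y x \<noteq> 0" using assms(2) unfolding sqnorm_def by fastforce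
  then show ?thesis using metric_pos[OF assms(1)] unfolding sqnorm_def by blast
qed

end

locale vector_field_chart = riemannian_chart +
  fixes Y :: "real^'n \<Rightarrow> real^'n"
  assumes vector_field: "vector_field_on U Y"
begin

lemma vector_field_differentiable: "x \<in> U \<Longrightarrow> (\<lambda>y. Y y $ i) differentiable at x"
  using vector_field unfolding vector_field_on_def by blast

lemma lower_differentiable:
  assumes "x \<in> U"
  shows "(\<lambda>y. lower h Y y i) differentiable at x"
  unfolding lower_def using metric_differentiable[OF assms] vector_field_differentiable[OF assms]
  by (auto intro!: differentiable_sum differentiable_mult)

lemma sqnorm_differentiable:
  assumes "x \<in> U"
  shows "sqnorm h Y differentiable at x"
  unfolding sqnorm_def[abs_def] using metric_differentiable[OF assms] vector_field_differentiable[OF assms]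
  by (auto intro!: differentiable_sum differentiable_mult)

lemma pd_lower:
  assumes "x \<in> U"
  shows "pd (\<lambda>y. lower h Y y j) k x
    = (\<Sum>m\<in>UNIV. pd (\<lambda>y. h y $ j $ m) k x * Y x $ m + h x $ j $ m * pd (\<lambda>y. Y y $ m) k x)"
  unfolding lower_def using assms
  by (subst pd_sum) (auto simp: pd_mult metric_differentiable vector_field_differentiable)

lemma pd_sqnorm:
  assumes "x \<in> U"
  shows "pd (sqnorm h Y) k x = 2 * (\<Sum>j\<in>UNIV. Y x $ j * cov1 h (lower h Y) x k j)"
proof -
  define A where "A = (\<Sum>i\<in>UNIV. \<Sum>j\<in>UNIV. pd (\<lambda>y. h y $ i $ j) k x * Y x $ i * Y x $ j)"
  define B where "B = (\<Sum>i\<in>UNIV. \<Sum>j\<in>UNIV. h x $ i $ j * Y x $ i * pd (\<lambda>y. Y y $ j) k x)"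
  define T where "T = (\<Sum>j\<in>UNIV. Y x $ j * (\<Sum>l\<in>UNIV. christoffel h x l k j * lower h Y x l))"
  have "pd (sqnorm h Y) k x = (\<Sum>i\<in>UNIV. \<Sum>j\<in>UNIV. pd (\<lambda>y. h y $ i $ j) k x * Y x $ i * Y x $ j
      + h x $ i $ j * pd (\<lambda>y. Y y $ i) k x * Y x $ j + h x $ i $ j * Y x $ i * pd (\<lambda>y. Y y $ j) k x)"
    unfolding sqnorm_def[abs_def] using assms
    by (simp add: pd_sum pd_mult metric_differentiable vector_field_differentiable
        differentiable_mult algebra_simps)
  also have "\<dots> = A + 2 * B"
  proof -
    have "(\<Sum>i\<in>UNIV. \<Sum>j\<in>UNIV. h x $ i $ j * pd (\<lambda>y. Y y $ i) k x * Y x $ j) = B"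
      unfolding B_def by (subst sum.swap) (simp add: metric_sym[OF assms] mult_ac)
    then show ?thesis unfolding A_def B_def by (simp add: sum.distrib)
  qed
  finally have df: "pd (sqnorm h Y) k x = A + 2 * B" .
  have lowered: "(\<Sum>i\<in>UNIV. \<Sum>j\<in>UNIV. (\<Sum>l\<in>UNIV. christoffel h x l k i * h x $ l $ j) * Y x $ i * Y x $ j) = T"
    unfolding T_def lower_def sum_distrib_left sum_distrib_right
    by (rule sum.cong[OF refl], subst sum.swap) (simp add: mult_ac)
  have "A = (\<Sum>i\<in>UNIV. \<Sum>j\<in>UNIV. (\<Sum>l\<in>UNIV. christoffel h x l k i * h x $ l $ j) * Y x $ i * Y x $ j)
      + (\<Sum>i\<in>UNIV. \<Sum>j\<in>UNIV. (\<Sum>l\<in>UNIV. christoffel h x l k j * h x $ i $ l) * Y x $ i * Y x $ j)"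
    unfolding A_def metric_compatibility[OF assms] by (simp add: distrib_right sum.distrib)
  also have "(\<Sum>i\<in>UNIV. \<Sum>j\<in>UNIV. (\<Sum>l\<in>UNIV. christoffel h x l k j * h x $ i $ l) * Y x $ i * Y x $ j)
      = (\<Sum>i\<in>UNIV. \<Sum>j\<in>UNIV. (\<Sum>l\<in>UNIV. christoffel h x l k i * h x $ l $ j) * Y x $ i * Y x $ j)"
    by (subst sum.swap) (simp add: metric_sym[OF assms] mult_ac)
  finally have AT: "A = 2 * T" using lowered by simp
  have "(\<Sum>j\<in>UNIV. Y x $ j * cov1 h (lower h Y) x k j) = A + B - T"
    unfolding cov1_def pd_lower[OF assms] A_def B_def T_def
    by (simp add: right_diff_distrib sum_subtractf sum_distrib_left sum.distrib distrib_left mult_ac)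
  then show ?thesis using df AT by simp
qed

end

locale nonnull_vector_field = vector_field_chart U h Y
  for U :: "(real^'n::finite) set" and h Y +
  assumes sqnorm_nonzero: "x \<in> U \<Longrightarrow> sqnorm h Y x \<noteq> 0"
begin

definition weight :: "real^'n \<Rightarrow> real" where
  "weight y = sqnorm h Y y powr ((- dimn TYPE('n) - 2) / 2)"

definition tf_square :: "real^'n \<Rightarrow> 'n \<Rightarrow> 'n \<Rightarrow> real" where
  "tf_square y i j = lower h Y y i * lower h Y y j - sqnorm h Y y / dimn TYPE('n) * h y $ i $ j"

lemma sqnorm_pos: "x \<in> U \<Longrightarrow> sqnorm h Y x > 0"
  using sqnorm_nonzero_imp_pos sqnorm_nonzero by blast

lemma Dtensor_eq:
  assumes "y \<in> U"
  shows "Dtensor h Y y i j = weight y * tf_square y i j"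
proof -
  have "sqrt (sqnorm h Y y) powr (- dimn TYPE('n) - 2) = weight y"
    using sqnorm_pos[OF assms] by (simp add: weight_def powr_half_sqrt[symmetric] powr_powr)
  then show ?thesis
    unfolding Dtensor_def tracefree_def tf_square_def by (simp add: htrace_outer_lower[OF assms])
qed

lemma weight_differentiable: "x \<in> U \<Longrightarrow> weight differentiable at x"
  unfolding weight_def[abs_def] differentiable_def
  using has_derivative_powr[OF sqnorm_differentiable[THEN frechet_derivative_works[THEN iffD1]]
      has_derivative_const] sqnorm_pos by blast

lemma tf_square_differentiable: "x \<in> U \<Longrightarrow> (\<lambda>y. tf_square y i j) differentiable at x"
  unfolding tf_square_def
  by (intro differentiable_diff differentiable_mult differentiable_divide lower_differentiable
      sqnorm_differentiable metric_differentiable) (use dimn_pos[where 'n='n] in auto)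

lemma pd_weight:
  assumes "x \<in> U"
  shows "pd weight k x
    = - (dimn TYPE('n) + 2) * weight x * (\<Sum>j\<in>UNIV. Y x $ j * cov1 h (lower h Y) x k j) / sqnorm h Y x"
  unfolding weight_def[abs_def]
  by (simp add: pd_powr sqnorm_differentiable sqnorm_pos pd_sqnorm assms dimn_pos)

lemma cov2_tf_square:
  assumes "x \<in> U"
  shows "cov2 h tf_square x k i j = cov1 h (lower h Y) x k i * lower h Y x j
    + lower h Y x i * cov1 h (lower h Y) x k j - pd (sqnorm h Y) k x / dimn TYPE('n) * h x $ i $ j"
proof -
  let ?n = "dimn TYPE('n)"
  have "cov2 h tf_square x k i j
      = cov2 h (\<lambda>y i j. lower h Y y i * lower h Y y j) x k i j
        - cov2 h (\<lambda>y i j. sqnorm h Y y / ?n * h y $ i $ j) x k i j"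
    unfolding tf_square_def[abs_def] using assms dimn_pos[where 'n='n]
    by (intro cov2_diff) (auto intro!: differentiable_mult differentiable_divide lower_differentiable
        sqnorm_differentiable metric_differentiable)
  also have "cov2 h (\<lambda>y i j. lower h Y y i * lower h Y y j) x k i j
      = cov1 h (lower h Y) x k i * lower h Y x j + lower h Y x i * cov1 h (lower h Y) x k j"
    using assms by (intro cov2_tensor_product lower_differentiable)
  also have "cov2 h (\<lambda>y i j. sqnorm h Y y / ?n * h y $ i $ j) x k i j = pd (sqnorm h Y) k x / ?n * h x $ i $ j"
    using assms dimn_pos[where 'n='n]
    by (subst cov2_mult_scalar) (auto simp: cov2_metric pd_divide_const sqnorm_differentiable
        metric_differentiable intro!: differentiable_divide)
  finally show ?thesis .
qed

lemma cov2_Dtensor: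
  assumes "x \<in> U"
  shows "cov2 h (Dtensor h Y) x k i j = pd weight k x * tf_square x i j + weight x * cov2 h tf_square x k i j"
proof -
  have "cov2 h (Dtensor h Y) x k i j = cov2 h (\<lambda>y i j. weight y * tf_square y i j) x k i j"
    using Dtensor_eq by (intro cov2_cong[OF open_U assms]) (simp add: fun_eq_iff)
  also have "\<dots> = pd weight k x * tf_square x i j + weight x * cov2 h tf_square x k i j"
    using assms by (intro cov2_mult_scalar weight_differentiable tf_square_differentiable)
  finally show ?thesis .
qed

lemma tf_square_sym: "x \<in> U \<Longrightarrow> tf_square x i j = tf_square x j i"
  unfolding tf_square_def by (simp add: metric_sym[of x i j])

lemma htrace_tf_square:
  assumes "x \<in> U"
  shows "htrace h x (tf_square x) = 0"
proof -
  have "htrace h x (tf_square x) = htrace h x (\<lambda>i j. lower h Y x i * lower h Y x j)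
      - sqnorm h Y x / dimn TYPE('n) * htrace h x (\<lambda>i j. h x $ i $ j)"
    unfolding htrace_def tf_square_def
    by (simp add: right_diff_distrib sum_subtractf sum_distrib_left mult_ac)
  then show ?thesis using dimn_pos[where 'n='n] by (simp add: htrace_outer_lower htrace_metric assms)
qed

lemma hinv_tf_square:
  assumes "x \<in> U"
  shows "(\<Sum>j\<in>UNIV. hinv h x j k * tf_square x i j)
    = lower h Y x i * Y x $ k - sqnorm h Y x / dimn TYPE('n) * (if i = k then 1 else 0)"
proof -
  have "(\<Sum>j\<in>UNIV. hinv h x j k * tf_square x i j)
      = lower h Y x i * (\<Sum>j\<in>UNIV. hinv h x k j * lower h Y x j)
        - sqnorm h Y x / dimn TYPE('n) * (\<Sum>j\<in>UNIV. h x $ i $ j * hinv h x j k)"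
    unfolding tf_square_def
    by (simp add: right_diff_distrib sum_subtractf sum_distrib_left hinv_sym[OF assms] mult_ac)
  then show ?thesis by (simp add: hinv_lower metric_hinv assms)
qed

lemma divergence_Dtensor_expand:
  assumes "x \<in> U"
  shows "divergence h (Dtensor h Y) x i
    = (\<Sum>k\<in>UNIV. pd weight k x * Y x $ k) * lower h Y x i
      + weight x * ((\<Sum>k\<in>UNIV. Y x $ k * cov1 h (lower h Y) x k i)
        + lower h Y x i * htrace h x (cov1 h (lower h Y) x))
      - (sqnorm h Y x / dimn TYPE('n) * pd weight i x + weight x * (pd (sqnorm h Y) i x / dimn TYPE('n)))"
proof -
  let ?N = "cov1 h (lower h Y) x" and ?L = "lower h Y x" and ?n = "dimn TYPE('n)"
  have inner: "(\<Sum>j\<in>UNIV. hinv h x j k * cov2 h (Dtensor h Y) x k i j)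
      = pd weight k x * Y x $ k * ?L i
        + weight x * (Y x $ k * ?N k i + ?L i * (\<Sum>j\<in>UNIV. hinv h x k j * ?N k j))
        - (if k = i then sqnorm h Y x / ?n * pd weight k x + weight x * (pd (sqnorm h Y) k x / ?n) else 0)"
    for k
  proof -
    have expand: "(\<Sum>j\<in>UNIV. hinv h x j k * cov2 h (Dtensor h Y) x k i j)
        = pd weight k x * (\<Sum>j\<in>UNIV. hinv h x j k * tf_square x i j)
          + weight x * (?N k i * (\<Sum>j\<in>UNIV. hinv h x k j * ?L j) + ?L i * (\<Sum>j\<in>UNIV. hinv h x k j * ?N k j)
            - pd (sqnorm h Y) k x / ?n * (\<Sum>j\<in>UNIV. h x $ i $ j * hinv h x j k))"
      unfolding cov2_Dtensor[OF assms] cov2_tf_square[OF assms]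
      by (simp add: distrib_left right_diff_distrib sum.distrib sum_subtractf sum_distrib_left
          hinv_sym[OF assms] mult_ac)
    show ?thesis
      unfolding expand hinv_tf_square[OF assms] hinv_lower[OF assms] metric_hinv[OF assms]
      by (cases "k = i") (simp_all add: algebra_simps)
  qed
  have "divergence h (Dtensor h Y) x i = (\<Sum>k\<in>UNIV. \<Sum>j\<in>UNIV. hinv h x j k * cov2 h (Dtensor h Y) x k i j)"
    unfolding divergence_def by (rule sum.swap)
  then show ?thesis
    unfolding inner htrace_def
    by (simp add: sum.distrib sum_subtractf sum_distrib_left sum_distrib_right distrib_left mult_ac)
qed

lemma divergence_Dtensor:
  assumes x: "x \<in> U"
  defines "C \<equiv> \<lambda>i. \<Sum>j\<in>UNIV. Y x $ j * tracefree h x (symcov h Y x) i j"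
  shows "divergence h (Dtensor h Y) x i = weight x * (2 * C i
    - (dimn TYPE('n) + 2) * lower h Y x i * (\<Sum>j\<in>UNIV. Y x $ j * C j) / sqnorm h Y x)"
proof -
  let ?N = "cov1 h (lower h Y) x" and ?L = "lower h Y x" and ?n = "dimn TYPE('n)"
    and ?f = "sqnorm h Y x" and ?tr = "htrace h x (cov1 h (lower h Y) x)"
  define P where "P k = (\<Sum>j\<in>UNIV. Y x $ j * ?N k j)" for k
  define Q where "Q i = (\<Sum>k\<in>UNIV. Y x $ k * ?N k i)" for i
  define B where "B = (\<Sum>k\<in>UNIV. Y x $ k * P k)"
  have C: "C i = (P i + Q i) / 2 - ?tr / ?n * ?L i" for i
    unfolding C_def contract_tracefree htrace_symcov[OF x] P_def Q_def
    by (simp add: symcov_def add_divide_distrib distrib_left sum.distrib sum_divide_distrib)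
  have YQ: "(\<Sum>i\<in>UNIV. Y x $ i * Q i) = B"
    unfolding B_def P_def Q_def sum_distrib_left by (subst sum.swap) (simp add: mult_ac)
  have "Y x $ i * C i = Y x $ i * P i / 2 + Y x $ i * Q i / 2 - ?tr / ?n * (Y x $ i * ?L i)" for i
    by (simp add: C algebra_simps)
  then have "(\<Sum>i\<in>UNIV. Y x $ i * C i)
      = B / 2 + (\<Sum>i\<in>UNIV. Y x $ i * Q i) / 2 - ?tr / ?n * (\<Sum>i\<in>UNIV. Y x $ i * ?L i)"
    unfolding B_def by (simp only: sum.distrib sum_subtractf sum_divide_distrib sum_distrib_left)
  then have Z: "(\<Sum>i\<in>UNIV. Y x $ i * C i) = B - ?tr / ?n * ?f"
    by (simp add: YQ sum_vector_lower)
  have dw: "pd weight k x = - (?n + 2) * weight x * P k / ?f" for k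
    unfolding P_def by (rule pd_weight[OF x])
  have df: "pd (sqnorm h Y) k x = 2 * P k" for k
    unfolding P_def by (rule pd_sqnorm[OF x])
  have sum_dw: "(\<Sum>k\<in>UNIV. pd weight k x * Y x $ k) = - (?n + 2) * weight x * B / ?f"
    unfolding dw B_def by (simp add: sum_divide_distrib sum_distrib_left mult_ac)
  have "?f \<noteq> 0" "?n \<noteq> 0"
    using sqnorm_nonzero[OF x] dimn_pos[where 'n='n] by auto
  then show ?thesis
    unfolding divergence_Dtensor_expand[OF x] sum_dw Z unfolding dw df C Q_def[symmetric]
    by (simp add: field_simps)
qed

lemma weight_pos: "x \<in> U \<Longrightarrow> weight x > 0"
  by (simp add: weight_def sqnorm_nonzero)

lemma Dtensor_sym: "x \<in> U \<Longrightarrow> Dtensor h Y x i j = Dtensor h Y x j i"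
  by (simp add: Dtensor_eq tf_square_sym[of x i j])

lemma htrace_Dtensor:
  assumes "x \<in> U"
  shows "htrace h x (Dtensor h Y x) = 0"
proof -
  have "htrace h x (Dtensor h Y x) = weight x * htrace h x (tf_square x)"
    unfolding htrace_def by (simp add: Dtensor_eq[OF assms] sum_distrib_left mult_ac)
  then show ?thesis by (simp add: htrace_tf_square[OF assms])
qed

end

lemma rank_one_update_eq_zero_iff:
  fixes Y L C :: "'i::finite \<Rightarrow> real"
  assumes YL: "(\<Sum>i\<in>UNIV. Y i * L i) = f" and "f \<noteq> 0" "w \<noteq> 0" "n \<noteq> 0"
  shows "(\<forall>i. w * (2 * C i - (n + 2) * L i * (\<Sum>j\<in>UNIV. Y j * C j) / f) = 0) \<longleftrightarrow> (\<forall>i. C i = 0)"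
proof
  define Z where "Z = (\<Sum>j\<in>UNIV. Y j * C j)"
  assume "\<forall>i. w * (2 * C i - (n + 2) * L i * (\<Sum>j\<in>UNIV. Y j * C j) / f) = 0"
  then have C: "2 * C i = (n + 2) * Z / f * L i" for i
    using \<open>w \<noteq> 0\<close> by (simp add: Z_def)
  have "2 * Z = (\<Sum>i\<in>UNIV. Y i * (2 * C i))"
    by (simp add: Z_def sum_distrib_left mult_ac)
  also have "\<dots> = (n + 2) * Z / f * (\<Sum>i\<in>UNIV. Y i * L i)"
    unfolding C by (simp add: sum_distrib_left sum_divide_distrib mult_ac)
  finally have "2 * Z = (n + 2) * Z"
    using YL \<open>f \<noteq> 0\<close> by simp
  then have "Z = 0"
    using \<open>n \<noteq> 0\<close> by (simp add: algebra_simps)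
  then show "\<forall>i. C i = 0"
    using C by simp
qed simp

theorem lemma1:
  fixes U :: "(real^'n::finite) set"
    and h :: "real^'n \<Rightarrow> real^'n^'n"
    and Y :: "real^'n \<Rightarrow> real^'n"
  assumes "open U"
    and "riemannian_metric_on U h"
    and "vector_field_on U Y"
    and "\<forall>x\<in>U. sqnorm h Y x \<noteq> 0"
  shows "TT_on U h (Dtensor h Y) \<longleftrightarrow>
         (\<forall>x\<in>U. \<forall>i. (\<Sum>j\<in>UNIV. Y x $ j * tracefree h x (symcov h Y x) i j) = 0)"
proof -
  interpret nonnull_vector_field U h Y
    using assms by unfold_locales auto
  have "(\<forall>i. divergence h (Dtensor h Y) x i = 0)
      \<longleftrightarrow> (\<forall>i. (\<Sum>j\<in>UNIV. Y x $ j * tracefree h x (symcov h Y x) i j) = 0)" if "x \<in> U" for x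
    unfolding divergence_Dtensor[OF that]
    using sqnorm_nonzero[OF that] weight_pos[OF that] dimn_pos[where 'n='n]
    by (intro rank_one_update_eq_zero_iff) (auto simp: sum_vector_lower)
  then show ?thesis
    unfolding TT_on_def using Dtensor_sym htrace_Dtensor by blast
qed

end
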